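(* Consider the curved-exam game described in the context. Fix a student $i$, an effort $x_i\in[0,1)$ and an increment $\Delta x_i>0$ with $x_i+\Delta x_i<1$. Then the extended-real-valued function $$x_{-i}\longmapsto \log U_i(x_i+\Delta x_i,x_{-i})-\log U_i(x_i,x_{-i})\qquad(\log 0:=-\infty)$$ is non-decreasing in each opponent effort $x_j$, $j\neq i$, on $[0,1]^{n-1}$.
   Context: The curved-exam game $\Gamma_n$: fix an integer $n\ge 2$ (number of students), ability parameters $\alpha_1,\dots,\alpha_n\in(0,1)$ and a target mean $m\in(0,1)$. Each student $i\in\{1,\dots,n\}$ chooses an effort $x_i\in[0,1]$; write $x=(x_1,\dots,x_n)$, $x_{-i}=(x_j)_{j\neq i}$, $\bar x=\frac1n\sum_{j=1}^n x_j$ and $\bar x_{-i}=\frac1{n-1}\sum_{j\neq i}x_j$. Student $i$'s curved grade is $G_i(x)=x_i+\max(m-\bar x,0)=\max\!\big(m+\tfrac{n-1}{n}(x_i-\bar x_{-i}),\,x_i\big)$ (never truncated at $1$), his leisure is $1-x_i$, and his payoff is $U_i(x)=G_i(x)^{\alpha_i}(1-x_i)^{1-\alpha_i}$. *)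

theory Defs
  imports "HOL-Analysis.Analysis" "HOL-Library.Extended_Real"
begin

text \<open>Effort profiles are functions nat => real; students are indexed by 1..n.\<close>

definition mean_effort :: "nat \<Rightarrow> (nat \<Rightarrow> real) \<Rightarrow> real" where
  "mean_effort n x = (\<Sum>j\<in>{1..n}. x j) / real n"

text \<open>Curved grade G_i(x) = x_i + max(m - mean x, 0) (never truncated at 1).\<close>
definition grade :: "nat \<Rightarrow> real \<Rightarrow> (nat \<Rightarrow> real) \<Rightarrow> nat \<Rightarrow> real" where
  "grade n m x i = x i + max (m - mean_effort n x) 0"

definition payoff :: "nat \<Rightarrow> (nat \<Rightarrow> real) \<Rightarrow> real \<Rightarrow> (nat \<Rightarrow> real) \<Rightarrow> nat \<Rightarrow> real" where
  "payoff n alpha m x i = grade n m x i powr alpha i * (1 - x i) powr (1 - alpha i)"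

definition elog :: "real \<Rightarrow> ereal" where
  "elog u = (if u > 0 then ereal (ln u) else -\<infinity>)"

definition log_gain :: "nat \<Rightarrow> (nat \<Rightarrow> real) \<Rightarrow> real \<Rightarrow> nat \<Rightarrow> real \<Rightarrow> real \<Rightarrow> (nat \<Rightarrow> real) \<Rightarrow> ereal" where
  "log_gain n alpha m i xi dx x =
     elog (payoff n alpha m (x(i := xi + dx)) i) - elog (payoff n alpha m (x(i := xi)) i)"

end

theory Submission
  imports Defs
begin

text \<open>With the opponents' efforts fixed, student i's grade as a function of his own effort s
  is max (k s + c) s, where k = 1 - 1/n and c = m - (opponents' total effort)/n. Raising an
  opponent's effort lowers c, and for p \<le> q the ratio of the grades at q and at p is
  non-increasing in c (the cross inequality below). In the log-gain the leisure factors
  cancel, so it is a positive multiple of the log of that ratio, or +\<infinity> when the grade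
  at p vanishes.\<close>

lemma max_affine_cross_le:
  fixes k p q c c' :: real
  assumes "0 \<le> k" "k \<le> 1" "0 \<le> p" "p \<le> q" "c' \<le> c"
  shows "max (k * q + c) q * max (k * p + c') p \<le> max (k * q + c') q * max (k * p + c) p"
    (is "?X * ?Y \<le> ?X' * ?Y'")
proof -
  have "k * (p * (c - c')) \<le> k * (q * (c - c'))"
    using assms by (intro mult_left_mono mult_right_mono) auto
  then have affine: "(k * q + c) * (k * p + c') \<le> (k * q + c') * (k * p + c)"
    by (simp add: algebra_simps)
  have "q * p \<le> ?X' * ?Y'"
    using assms by (auto intro!: mult_mono)
  have le_q_times_upper: "q * (k * p + c) \<le> ?X' * ?Y'" if "0 \<le> k * p + c"
    using assms that by (auto intro!: mult_mono)
  consider "?X = q" "?Y = p" | "?X = q" "?Y = k * p + c'" "p \<le> k * p + c'"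
    | "?X = k * q + c" "q \<le> k * q + c" "?Y = p"
    | "?X = k * q + c" "q \<le> k * q + c" "?Y = k * p + c'" "p \<le> k * p + c'"
    by (simp add: max_def) argo
  then show ?thesis
  proof cases
    case 1
    with \<open>q * p \<le> ?X' * ?Y'\<close> show ?thesis by simp
  next
    case 2
    have "q * (k * p + c') \<le> q * (k * p + c)"
      using assms by (intro mult_left_mono) auto
    moreover have "0 \<le> k * p + c"
      using 2 assms by linarith
    ultimately show ?thesis
      using 2 le_q_times_upper by simp
  next
    case 3
    \<comment> \<open>the upper branch is active at q only if c \<ge> (1 - k) q \<ge> 0\<close>
    have "0 \<le> c"
      using 3 assms by (smt (verit) mult_left_le_one_le)
    then have "(k * q + c) * p \<le> q * (k * p + c)"
      using assms by (simp add: algebra_simps mult_left_mono)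
    with 3 le_q_times_upper \<open>0 \<le> c\<close> assms show ?thesis by simp
  next
    case 4
    have "0 \<le> k * p + c"
      using 4 assms by linarith
    then have "(k * q + c') * (k * p + c) \<le> ?X' * ?Y'"
      using assms by (intro mult_mono) auto
    with 4 affine show ?thesis by simp
  qed
qed

lemma grade_update_self:
  fixes y :: "nat \<Rightarrow> real"
  assumes "i \<in> {1..n}"
  shows "grade n m (y(i := s)) i
    = max ((1 - 1 / real n) * s + (m - (\<Sum>k\<in>{1..n} - {i}. y k) / real n)) s"
proof -
  have "(\<Sum>k\<in>{1..n}. (y(i := s)) k) = s + (\<Sum>k\<in>{1..n} - {i}. y k)"
    using assms by (simp add: sum.remove)
  then have "mean_effort n (y(i := s)) = (s + (\<Sum>k\<in>{1..n} - {i}. y k)) / real n"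
    by (simp add: mean_effort_def)
  then show ?thesis
    by (simp add: grade_def max_def add_divide_distrib algebra_simps)
qed

lemma elog_powr_mult_diff_mono:
  fixes g g' h h' u v a b :: real
  assumes "0 < g" "0 < g'" "0 \<le> h'" "g * h' \<le> g' * h" "0 \<le> a" "0 < u" "0 < v"
  shows "elog (g powr a * u powr b) - elog (h powr a * v powr b)
    \<le> elog (g' powr a * u powr b) - elog (h' powr a * v powr b)"
proof (cases "h' = 0")
  case True
  with assms show ?thesis by (simp add: elog_def)
next
  case False
  with assms have "0 < h'" by simp
  with assms have "0 < h"
    by (smt (verit) mult_pos_pos zero_less_mult_pos)
  have "ln (g * h') \<le> ln (g' * h)"
    using assms \<open>0 < h'\<close> \<open>0 < h\<close> by simp
  then have "ln g + ln h' \<le> ln g' + ln h"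
    using assms \<open>0 < h'\<close> \<open>0 < h\<close> by (simp add: ln_mult)
  then have "a * ln g + a * ln h' \<le> a * ln g' + a * ln h"
    using mult_left_mono[OF _ \<open>0 \<le> a\<close>] by (simp flip: distrib_left)
  with assms \<open>0 < h'\<close> \<open>0 < h\<close> show ?thesis
    by (simp add: elog_def ln_mult ln_powr)
qed

theorem mainTheorem1:
  fixes n :: nat and alpha :: "nat \<Rightarrow> real" and m :: real
    and i :: nat and xi dx :: real and x :: "nat \<Rightarrow> real" and j :: nat and t t' :: real
  assumes "n \<ge> 2"
    and "\<forall>k\<in>{1..n}. 0 < alpha k \<and> alpha k < 1"
    and "0 < m" "m < 1"
    and "i \<in> {1..n}"
    and "0 \<le> xi" "xi < 1" "0 < dx" "xi + dx < 1"
    and "\<forall>k\<in>{1..n} - {i}. 0 \<le> x k \<and> x k \<le> 1"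
    and "j \<in> {1..n}" "j \<noteq> i"
    and "0 \<le> t" "t \<le> t'" "t' \<le> 1"
  shows "log_gain n alpha m i xi dx (x(j := t)) \<le> log_gain n alpha m i xi dx (x(j := t'))"
proof -
  \<comment> \<open>only the hypotheses on i, alpha i > 0, xi, dx and t \<le> t' are needed\<close>
  define k where "k = 1 - 1 / real n"
  define c where "c u = m - (\<Sum>l\<in>{1..n} - {i}. (x(j := u)) l) / real n" for u
  have k: "0 \<le> k" "k \<le> 1"
    using \<open>i \<in> {1..n}\<close> by (auto simp: k_def)
  have "(\<Sum>l\<in>{1..n} - {i}. (x(j := t)) l) \<le> (\<Sum>l\<in>{1..n} - {i}. (x(j := t')) l)"
    using \<open>t \<le> t'\<close> by (intro sum_mono) auto
  then have "c t' \<le> c t"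
    by (simp add: c_def divide_right_mono)
  then have cross: "max (k * (xi + dx) + c t) (xi + dx) * max (k * xi + c t') xi
      \<le> max (k * (xi + dx) + c t') (xi + dx) * max (k * xi + c t) xi"
    using k assms by (intro max_affine_cross_le) auto
  have grade: "grade n m ((x(j := u))(i := s)) i = max (k * s + c u) s" for u s
    using grade_update_self[OF \<open>i \<in> {1..n}\<close>] by (simp add: k_def c_def)
  show ?thesis
    unfolding log_gain_def payoff_def fun_upd_same grade
    using assms by (intro elog_powr_mult_diff_mono[OF _ _ _ cross]) (auto simp: less_imp_le)
qed

end
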